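(* Let $m\ge1$ and $[m]=\{1<2<\dots<m\}$. For every poset ideal $\mathcal{J}\subseteq\mathrm{Hom}([m],\mathbb{N})$ the projected co-letterplace ideal $L^{p_2}([m],\mathcal{J})$ is a strongly stable $m$-regular ideal of $k[x_0,x_1,x_2,\dots]$, and $\mathcal{J}\mapsto L^{p_2}([m],\mathcal{J})$ is a one-to-one correspondence between poset ideals of $\mathrm{Hom}([m],\mathbb{N})$ and finitely generated strongly stable $m$-regular ideals of $k[x_0,x_1,x_2,\dots]$.
   Context: $\mathbb{N}=\{0,1,2,\dots\}$; $\mathrm{Hom}([m],\mathbb{N})$ is the set of weakly increasing maps $[m]\to\mathbb{N}$ ordered pointwise. A marker for $\mathcal{J}$ is a poset ideal $I=\{1,\dots,r\}\subseteq[m]$ ($0\le r\le m$) with an isotone $\alpha:I\to\mathbb{N}$ such that every isotone $\phi:[m]\to\mathbb{N}$ with $\phi|_I=\alpha$ lies in $\mathcal{J}$; its graph is $\Gamma\alpha=\{(a,\alpha(a)):a\in I\}$. $k$ is a field; the co-letterplace ideal $L([m],\mathcal{J})\subseteq k[x_{a,i}:(a,i)\in[m]\times\mathbb{N}]$ is generated by $\prod_{(a,i)\in\Gamma\alpha}x_{a,i}$ over all markers $\alpha$. $L^{p_2}([m],\mathcal{J})$ is the ideal of $k[x_0,x_1,\dots]$ generated by the images of these generators under $x_{a,i}\mapsto x_i$. A monomial ideal is strongly stable if for every monomial $u$ and $i<j$, $x_ju\in I$ implies $x_iu\in I$. A finitely generated ideal is $m$-regular if its Castelnuovo–Mumford regularity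 (in a polynomial subring in finitely many variables containing its generators) is at most $m$. *)

theory Defs
  imports Complex_Main "HOL-Library.Poly_Mapping"
begin

(* The polynomial ring k[x_0,x_1,x_2,...]: finitely supported maps from monomials
  (exponent vectors, nat \<Rightarrow>\<^sub>0 nat, variable x_i has index i) to coefficients. *)
type_synonym 'k poly_ring = "(nat \<Rightarrow>\<^sub>0 nat) \<Rightarrow>\<^sub>0 'k"

definition monom :: "(nat \<Rightarrow>\<^sub>0 nat) \<Rightarrow> 'k::comm_ring_1 poly_ring" where
  "monom u = Poly_Mapping.single u 1"

definition var_exp :: "nat \<Rightarrow> (nat \<Rightarrow>\<^sub>0 nat)" where
  "var_exp i = Poly_Mapping.single i 1"

definition is_ideal :: "'k::comm_ring_1 poly_ring set \<Rightarrow> bool" where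
  "is_ideal I = module.subspace (*) I"

definition ideal_gen :: "'k::comm_ring_1 poly_ring set \<Rightarrow> 'k poly_ring set" where
  "ideal_gen G = module.span (*) G"

definition fin_gen :: "'k::comm_ring_1 poly_ring set \<Rightarrow> bool" where
  "fin_gen I = (\<exists>G. finite G \<and> I = ideal_gen G)"

definition monomial_ideal :: "'k::comm_ring_1 poly_ring set \<Rightarrow> bool" where
  "monomial_ideal I = (\<exists>U. I = ideal_gen (monom ` U))"

definition strongly_stable :: "'k::comm_ring_1 poly_ring set \<Rightarrow> bool" where
  "strongly_stable I = (monomial_ideal I \<and>
     (\<forall>u i j. i < j \<longrightarrow> monom (u + var_exp j) \<in> I \<longrightarrow> monom (u + var_exp i) \<in> I))"

definition vars :: "'k::comm_ring_1 poly_ring \<Rightarrow> nat set" where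
  "vars p = (\<Union>u\<in>Poly_Mapping.keys p. Poly_Mapping.keys (u::nat \<Rightarrow>\<^sub>0 nat))"

(* Koszul complex K(x_0,...,x_{n-1}; I) of a monomial ideal I (of S = k[x_0..x_{n-1}]),
  in multidegree b.  K_i(I)_b = \<Oplus>_{|F|=i} I_{b - F} e_F, where I_c is spanned by the monomial
  x^c if x^c \<in> I and is zero otherwise.  Chains are coefficient functions on the index sets F. *)
definition sq_exp :: "nat set \<Rightarrow> (nat \<Rightarrow>\<^sub>0 nat)" where
  "sq_exp F = (\<Sum>j\<in>F. var_exp j)"

definition koszul_basis :: "'k::comm_ring_1 poly_ring set \<Rightarrow> nat \<Rightarrow> (nat \<Rightarrow>\<^sub>0 nat) \<Rightarrow> nat \<Rightarrow> nat set set" where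
  "koszul_basis I n b i = {F. F \<subseteq> {0..<n} \<and> card F = i \<and>
      (\<exists>c. b = c + sq_exp F \<and> monom c \<in> I)}"

definition koszul_chains :: "'k::field poly_ring set \<Rightarrow> nat \<Rightarrow> (nat \<Rightarrow>\<^sub>0 nat) \<Rightarrow> nat \<Rightarrow> (nat set \<Rightarrow>\<^sub>0 'k) set" where
  "koszul_chains I n b i = {f. Poly_Mapping.keys f \<subseteq> koszul_basis I n b i}"

(* Koszul differential: e_F \<mapsto> \<Sum>_{j\<in>F} (-1)^{#{l\<in>F. l<j}} x_j e_{F-{j}}; in multidegree b the
  factor x_j just identifies I_{b-F} with I_{b-(F-{j})}, so only the sign remains. *)
definition koszul_diff :: "(nat set \<Rightarrow>\<^sub>0 'k::field) \<Rightarrow> (nat set \<Rightarrow>\<^sub>0 'k)" where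
  "koszul_diff f = (\<Sum>F\<in>Poly_Mapping.keys f. \<Sum>j\<in>F.
      Poly_Mapping.single (F - {j}) ((-1) ^ card {l\<in>F. l < j} * Poly_Mapping.lookup f F))"

definition kscale :: "'k::field \<Rightarrow> (nat set \<Rightarrow>\<^sub>0 'k) \<Rightarrow> (nat set \<Rightarrow>\<^sub>0 'k)" where
  "kscale c f = Poly_Mapping.map (\<lambda>x. c * x) f"

(* Graded Betti number \<beta>_{i,b}(I) = dim_k Tor_i^S(I,k)_b = dim_k H_i(x_0..x_{n-1}; I)_b. *)
definition betti :: "'k::field poly_ring set \<Rightarrow> nat \<Rightarrow> nat \<Rightarrow> (nat \<Rightarrow>\<^sub>0 nat) \<Rightarrow> nat" where
  "betti I n i b =
     vector_space.dim kscale (koszul_chains I n b i \<inter> {f. koszul_diff f = 0})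
     - vector_space.dim kscale (koszul_diff ` koszul_chains I n b (Suc i))"

definition total_deg :: "(nat \<Rightarrow>\<^sub>0 nat) \<Rightarrow> nat" where
  "total_deg b = (\<Sum>j\<in>Poly_Mapping.keys b. Poly_Mapping.lookup b j)"

definition m_regular :: "nat \<Rightarrow> 'k::field poly_ring set \<Rightarrow> bool" where
  "m_regular m I = (monomial_ideal I \<and> fin_gen I \<and>
     (\<forall>n G. finite G \<and> I = ideal_gen G \<and> (\<forall>g\<in>G. vars g \<subseteq> {0..<n}) \<longrightarrow>
        (\<forall>i b. Poly_Mapping.keys b \<subseteq> {0..<n} \<and> betti I n i b \<noteq> 0 \<longrightarrow> total_deg b \<le> m + i)))"

(* Hom([m],\<nat>): weakly increasing maps {1..m} \<rightarrow> \<nat>, normalised to 0 outside {1..m}. *)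
definition hom_m :: "nat \<Rightarrow> (nat \<Rightarrow> nat) set" where
  "hom_m m = {f. mono_on {1..m} f \<and> (\<forall>a. a \<notin> {1..m} \<longrightarrow> f a = 0)}"

definition poset_ideal :: "nat \<Rightarrow> (nat \<Rightarrow> nat) set \<Rightarrow> bool" where
  "poset_ideal m J = (J \<subseteq> hom_m m \<and>
     (\<forall>\<phi>\<in>J. \<forall>\<psi>\<in>hom_m m. (\<forall>a\<in>{1..m}. \<psi> a \<le> \<phi> a) \<longrightarrow> \<psi> \<in> J))"

(* A marker: ideal I = {1..r} of [m] with isotone \<alpha> : I \<rightarrow> \<nat> such that every isotone
  extension to [m] lies in J (values of \<alpha> outside {1..r} are irrelevant). *)
definition marker :: "nat \<Rightarrow> (nat \<Rightarrow> nat) set \<Rightarrow> nat \<Rightarrow> (nat \<Rightarrow> nat) \<Rightarrow> bool" where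
  "marker m J r \<alpha> = (r \<le> m \<and> mono_on {1..r} \<alpha> \<and>
     (\<forall>\<phi>\<in>hom_m m. (\<forall>a\<in>{1..r}. \<phi> a = \<alpha> a) \<longrightarrow> \<phi> \<in> J))"

(* Image of the co-letterplace generator \<Prod>_{(a,i)\<in>\<Gamma>\<alpha>} x_{a,i} under x_{a,i} \<mapsto> x_i,
  i.e. the monomial \<Prod>_{a\<in>{1..r}} x_{\<alpha>(a)}. *)
definition p2_gen :: "nat \<Rightarrow> (nat \<Rightarrow> nat) \<Rightarrow> 'k::comm_ring_1 poly_ring" where
  "p2_gen r \<alpha> = monom (\<Sum>a\<in>{1..r}. var_exp (\<alpha> a))"

definition Lp2 :: "nat \<Rightarrow> (nat \<Rightarrow> nat) set \<Rightarrow> 'k::comm_ring_1 poly_ring set" where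
  "Lp2 m J = ideal_gen {p2_gen r \<alpha> | r \<alpha>. marker m J r \<alpha>}"

end

theory Submission
  imports Defs
begin

(*
  Markers are closed under lowering entries, because J is a poset ideal; lowering one entry of
  a sorted sequence and re-sorting gives a pointwise smaller sequence, whence strong stability.
  A marker can be cut to a prefix whose entries are bounded in terms of the prefix length
  only, so finitely many markers generate.  For regularity, let q be the largest variable of a
  multidegree b with |b| > m + i: multiplication by e_q is a contracting homotopy of the
  Koszul complex in degree b at position i, and strong stability together with generation in
  degrees at most m is exactly what makes it preserve the chains of the ideal.  The inverse
  map sends I to the set of all phi with x^phi in I.  A minimal generator has 0-th Betti
  number 1 in its own degree, so regularity bounds its degree by m, and sorted it is a marker.
*)

section \<open>Monomial ideals\<close>

interpretation R: module "(*) :: 'k::comm_ring_1 poly_ring \<Rightarrow> _"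
  by unfold_locales (auto simp: algebra_simps)

lemma ideal_gen_eq_span: "ideal_gen G = R.span G"
  unfolding ideal_gen_def by simp

lemma ideal_gen_base: "p \<in> G \<Longrightarrow> (p :: 'k::comm_ring_1 poly_ring) \<in> ideal_gen G"
  unfolding ideal_gen_eq_span by (rule R.span_base)

lemma ideal_gen_mult: "p \<in> ideal_gen G \<Longrightarrow> (q :: 'k::comm_ring_1 poly_ring) * p \<in> ideal_gen G"
  unfolding ideal_gen_eq_span by (rule R.span_scale)

lemma monom_mult: "(monom u :: 'k::comm_ring_1 poly_ring) * monom v = monom (u + v)"
  unfolding monom_def by (simp add: mult_single)

lemma keys_monom [simp]: "Poly_Mapping.keys (monom u :: 'k::comm_ring_1 poly_ring) = {u}"
  unfolding monom_def by simp

lemma keys_in_monomial_ideal: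
  assumes "p \<in> ideal_gen (monom ` U :: 'k::comm_ring_1 poly_ring set)" "k \<in> Poly_Mapping.keys p"
  shows "\<exists>u\<in>U. \<exists>w. k = u + w"
  using assms unfolding ideal_gen_eq_span
proof (induction p arbitrary: k rule: R.span_induct_alt)
  case (step c x y)
  then consider "k \<in> Poly_Mapping.keys (c * x)" | "k \<in> Poly_Mapping.keys y"
    using keys_add[of "c * x" y] by blast
  then show ?case
  proof cases
    case 1
    obtain u where "u \<in> U" "x = monom u" using step.hyps by blast
    then obtain a where "k = u + a" using 1 keys_mult[of c x] by (auto simp: add.commute)
    then show ?thesis using \<open>u \<in> U\<close> by blast
  qed (use step.IH in blast)
qed simp

lemma monom_in_ideal_gen_iff:
  "(monom u :: 'k::comm_ring_1 poly_ring) \<in> ideal_gen (monom ` U) \<longleftrightarrow> (\<exists>v\<in>U. \<exists>w. u = v + w)"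
proof
  assume "\<exists>v\<in>U. \<exists>w. u = v + w"
  then obtain v w where "v \<in> U" "u = v + w" by blast
  then have "(monom u :: 'k poly_ring) = monom w * monom v" by (simp add: monom_mult add.commute)
  then show "(monom u :: 'k poly_ring) \<in> ideal_gen (monom ` U)"
    using \<open>v \<in> U\<close> by (simp add: ideal_gen_mult ideal_gen_base)
qed (use keys_in_monomial_ideal[of "monom u"] in auto)

lemma monom_add_in_ideal_gen:
  "(monom u :: 'k::comm_ring_1 poly_ring) \<in> ideal_gen G \<Longrightarrow> monom (u + w) \<in> ideal_gen G"
  using ideal_gen_mult[of "monom u" G "monom w"] by (simp add: monom_mult add.commute)

lemma ideal_gen_monom_eqI:
  assumes "\<And>u. u \<in> U \<Longrightarrow> \<exists>v\<in>V. \<exists>w. u = v + w" "\<And>v. v \<in> V \<Longrightarrow> \<exists>u\<in>U. \<exists>w. v = u + w"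
  shows "ideal_gen (monom ` U :: 'k::comm_ring_1 poly_ring set) = ideal_gen (monom ` V)"
proof -
  have "monom ` U \<subseteq> ideal_gen (monom ` V :: 'k poly_ring set)"
    "monom ` V \<subseteq> ideal_gen (monom ` U :: 'k poly_ring set)"
    using assms by (auto simp only: image_subset_iff monom_in_ideal_gen_iff)
  then show ?thesis unfolding ideal_gen_eq_span R.span_eq by blast
qed

lemma expand_poly_mapping:
  "y = (\<Sum>G\<in>Poly_Mapping.keys y. Poly_Mapping.single G (Poly_Mapping.lookup y G))"
proof (rule poly_mapping_eqI)
  fix k
  have "Poly_Mapping.lookup (\<Sum>G\<in>Poly_Mapping.keys y. Poly_Mapping.single G (Poly_Mapping.lookup y G)) k
     = (\<Sum>G\<in>Poly_Mapping.keys y. if G = k then Poly_Mapping.lookup y G else 0)"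
    unfolding lookup_sum by (rule sum.cong) (auto simp: lookup_single when_def)
  also have "\<dots> = Poly_Mapping.lookup y k" by (simp add: in_keys_iff)
  finally show "Poly_Mapping.lookup y k = Poly_Mapping.lookup
      (\<Sum>G\<in>Poly_Mapping.keys y. Poly_Mapping.single G (Poly_Mapping.lookup y G)) k" by simp
qed

lemma in_ideal_gen_monom_keys:
  "(g :: 'k::comm_ring_1 poly_ring) \<in> ideal_gen (monom ` Poly_Mapping.keys g)"
proof -
  have single_eq: "Poly_Mapping.single 0 a * (monom k :: 'k poly_ring) = Poly_Mapping.single k a" for k a
    unfolding monom_def by (simp add: mult_single)
  have "g = (\<Sum>k\<in>Poly_Mapping.keys g. Poly_Mapping.single 0 (Poly_Mapping.lookup g k) * monom k)"
    using expand_poly_mapping[of g] by (simp add: single_eq)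
  also have "\<dots> \<in> ideal_gen (monom ` Poly_Mapping.keys g)"
    unfolding ideal_gen_eq_span by (intro R.span_sum R.span_scale R.span_base) auto
  finally show ?thesis .
qed

lemma finite_monomial_generators:
  assumes "monomial_ideal (I :: 'k::comm_ring_1 poly_ring set)" "fin_gen I"
  obtains K where "finite K" "I = ideal_gen (monom ` K)"
proof -
  obtain U where U: "I = ideal_gen (monom ` U)" using assms(1) unfolding monomial_ideal_def by blast
  obtain G where G: "finite G" "I = ideal_gen G" using assms(2) unfolding fin_gen_def by blast
  define K where "K = (\<Union>g\<in>G. Poly_Mapping.keys g)"
  have "monom ` K \<subseteq> R.span G"
  proof
    fix x :: "'k poly_ring" assume "x \<in> monom ` K"
    then obtain g k where g: "g \<in> G" "k \<in> Poly_Mapping.keys g" "x = monom k" unfolding K_def by blast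
    then have "g \<in> I" using G(2) ideal_gen_base by blast
    then have "monom k \<in> I"
      using keys_in_monomial_ideal[of g U k] g(2) U monom_in_ideal_gen_iff[of k U] by auto
    then show "x \<in> R.span G" using G(2) g(3) unfolding ideal_gen_eq_span by simp
  qed
  moreover have "G \<subseteq> R.span (monom ` K)"
  proof
    fix g assume "g \<in> G"
    then have "R.span (monom ` Poly_Mapping.keys g) \<subseteq> R.span (monom ` K :: 'k poly_ring set)"
      unfolding K_def by (intro R.span_mono) blast
    then show "g \<in> R.span (monom ` K)"
      using in_ideal_gen_monom_keys[of g] unfolding ideal_gen_eq_span by blast
  qed
  ultimately have "I = ideal_gen (monom ` K)"
    unfolding G(2) ideal_gen_eq_span R.span_eq by blast
  moreover have "finite K" unfolding K_def using G(1) by simp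
  ultimately show thesis using that by blast
qed

definition seq_exp :: "nat \<Rightarrow> (nat \<Rightarrow> nat) \<Rightarrow> (nat \<Rightarrow>\<^sub>0 nat)" where
  "seq_exp r f = (\<Sum>a\<in>{1..r}. var_exp (f a))"

definition count_le :: "nat \<Rightarrow> (nat \<Rightarrow> nat) \<Rightarrow> nat \<Rightarrow> nat" where
  "count_le r f v = card {a\<in>{1..r}. f a \<le> v}"

lemma lookup_var_exp: "Poly_Mapping.lookup (var_exp i) k = (if i = k then 1 else 0)"
  unfolding var_exp_def by (simp add: lookup_single)

lemma lookup_seq_exp: "Poly_Mapping.lookup (seq_exp r f) k = card {a\<in>{1..r}. f a = k}"
  unfolding seq_exp_def lookup_sum lookup_var_exp
  by (simp add: sum.If_cases Int_def conj_commute)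

lemma p2_gen_eq: "p2_gen r \<alpha> = monom (seq_exp r \<alpha>)"
  unfolding p2_gen_def seq_exp_def ..

lemma seq_exp_cong: "(\<And>a. a \<in> {1..r} \<Longrightarrow> f a = g a) \<Longrightarrow> seq_exp r f = seq_exp r g"
  unfolding seq_exp_def by (rule sum.cong) auto

lemma seq_exp_split: "k \<le> r \<Longrightarrow> seq_exp r f = seq_exp k f + (\<Sum>a\<in>{Suc k..r}. var_exp (f a))"
  unfolding seq_exp_def by (subst sum.union_disjoint[symmetric]) (auto intro: sum.cong)

lemma seq_exp_Suc: "seq_exp (Suc r) f = seq_exp r f + var_exp (f (Suc r))"
  unfolding seq_exp_def by (simp add: atLeastAtMostSuc_conv add.commute)

lemma seq_exp_update:
  assumes "a \<in> {1..r}"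
  shows "seq_exp r (f(a := i)) + var_exp (f a) = seq_exp r f + var_exp i"
proof -
  have "seq_exp r g = var_exp (g a) + (\<Sum>b\<in>{1..r}-{a}. var_exp (g b))" for g
    unfolding seq_exp_def using assms by (simp add: sum.remove)
  from this[of f] this[of "f(a := i)"] show ?thesis by (simp add: algebra_simps)
qed

lemma count_le_eq_sum: "count_le r f v = (\<Sum>k\<le>v. Poly_Mapping.lookup (seq_exp r f) k)"
proof -
  have "{a\<in>{1..r}. f a \<le> v} = (\<Union>k\<in>{..v}. {a\<in>{1..r}. f a = k})" by auto
  moreover have "card (\<Union>k\<in>{..v}. {a\<in>{1..r}. f a = k}) = (\<Sum>k\<le>v. card {a\<in>{1..r}. f a = k})"
    by (rule card_UN_disjoint) auto
  ultimately have "card {a\<in>{1..r}. f a \<le> v} = (\<Sum>k\<le>v. card {a\<in>{1..r}. f a = k})"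
    by simp
  then show ?thesis unfolding count_le_def lookup_seq_exp .
qed

lemma count_le_mono:
  "seq_exp m \<phi> = seq_exp r \<alpha> + w \<Longrightarrow> count_le r \<alpha> v \<le> count_le m \<phi> v"
  unfolding count_le_eq_sum by (simp add: lookup_add sum_mono)

lemma sorted_le_if_count_le:
  assumes "mono_on {1..m} \<beta>" "mono_on {1..r} \<alpha>" "r \<le> m"
    and count: "\<And>v. count_le r \<alpha> v \<le> count_le m \<beta> v" and a: "a \<in> {1..r}"
  shows "\<beta> a \<le> \<alpha> a"
proof (rule ccontr)
  assume "\<not> \<beta> a \<le> \<alpha> a"
  have "{1..a} \<subseteq> {b\<in>{1..r}. \<alpha> b \<le> \<alpha> a}"
    using a assms(2) by (auto intro: mono_onD)
  then have "a \<le> count_le r \<alpha> (\<alpha> a)"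
    unfolding count_le_def using card_mono[of _ "{1..a}"] by fastforce
  moreover have "{b\<in>{1..m}. \<beta> b \<le> \<alpha> a} \<subseteq> {1..a-1}"
    using assms(1,3) a \<open>\<not> \<beta> a \<le> \<alpha> a\<close> mono_onD[of "{1..m}" \<beta> a]
    by (force simp: not_le)
  then have "count_le m \<beta> (\<alpha> a) \<le> a - 1"
    unfolding count_le_def using card_mono[of "{1..a-1}"] by fastforce
  ultimately show False using count[of "\<alpha> a"] a by auto
qed

lemma total_deg_superset:
  assumes "finite S" "Poly_Mapping.keys b \<subseteq> S"
  shows "total_deg b = (\<Sum>j\<in>S. Poly_Mapping.lookup b j)"
  unfolding total_deg_def
  by (rule sum.mono_neutral_left) (use assms in \<open>auto simp: in_keys_iff\<close>)

lemma total_deg_add: "total_deg (b + c) = total_deg b + total_deg c"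
proof -
  let ?S = "Poly_Mapping.keys b \<union> Poly_Mapping.keys c"
  have "Poly_Mapping.keys (b + c) \<subseteq> ?S" by (rule keys_add)
  then show ?thesis
    using total_deg_superset[of ?S b] total_deg_superset[of ?S c] total_deg_superset[of ?S "b + c"]
    by (simp add: lookup_add sum.distrib)
qed

lemma total_deg_var_exp [simp]: "total_deg (var_exp i) = 1"
  unfolding total_deg_def var_exp_def by simp

lemma total_deg_zero [simp]: "total_deg 0 = 0"
  unfolding total_deg_def by simp

lemma total_deg_eq_0_iff [simp]: "total_deg b = 0 \<longleftrightarrow> b = 0"
  unfolding total_deg_def by (auto simp: in_keys_iff intro: poly_mapping_eqI)

lemma total_deg_seq_exp [simp]: "total_deg (seq_exp r f) = r"
  by (induction r) (simp_all add: seq_exp_def seq_exp_Suc total_deg_add)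

lemma add_var_exp_minus: "q \<in> Poly_Mapping.keys c \<Longrightarrow> c = (c - var_exp q) + var_exp q"
  by (intro poly_mapping_eqI) (auto simp: lookup_add lookup_minus lookup_var_exp in_keys_iff)

lemma sorted_seq_exp_exists:
  "total_deg c = r \<Longrightarrow>
    \<exists>\<alpha>. mono_on {1..r} \<alpha> \<and> seq_exp r \<alpha> = c \<and> (\<forall>a\<in>{1..r}. \<alpha> a \<in> Poly_Mapping.keys c)"
proof (induction r arbitrary: c)
  case 0
  then show ?case by (auto simp: seq_exp_def mono_on_def)
next
  case (Suc r)
  define q where "q = Max (Poly_Mapping.keys c)"
  have "c \<noteq> 0" using Suc.prems by auto
  then have q: "q \<in> Poly_Mapping.keys c" "\<And>j. j \<in> Poly_Mapping.keys c \<Longrightarrow> j \<le> q"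
    unfolding q_def by auto
  define c' where "c' = c - var_exp q"
  have c: "c = c' + var_exp q" unfolding c'_def using add_var_exp_minus[OF q(1)] .
  then have "total_deg c' = r" using Suc.prems by (simp add: total_deg_add)
  then obtain \<alpha> where \<alpha>: "mono_on {1..r} \<alpha>" "seq_exp r \<alpha> = c'"
      "\<forall>a\<in>{1..r}. \<alpha> a \<in> Poly_Mapping.keys c'"
    using Suc.IH by blast
  have keys_c': "Poly_Mapping.keys c' \<subseteq> Poly_Mapping.keys c"
    using c by (auto simp: in_keys_iff lookup_add)
  define \<beta> where "\<beta> = \<alpha>(Suc r := q)"
  have "mono_on {1..Suc r} \<beta>"
  proof (rule mono_onI)
    fix x y assume xy: "x \<in> {1..Suc r}" "y \<in> {1..Suc r}" "x \<le> y"
    show "\<beta> x \<le> \<beta> y"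
    proof (cases "y = Suc r")
      case True
      then show ?thesis using xy \<alpha>(3) keys_c' q(2) by (cases "x = Suc r") (force simp: \<beta>_def)+
    next
      case False
      then show ?thesis using xy \<alpha>(1) by (auto simp: \<beta>_def intro: mono_onD)
    qed
  qed
  moreover have "seq_exp (Suc r) \<beta> = c"
    using \<alpha>(2) c seq_exp_cong[of r \<beta> \<alpha>] unfolding seq_exp_Suc by (simp add: \<beta>_def)
  moreover have "\<forall>a\<in>{1..Suc r}. \<beta> a \<in> Poly_Mapping.keys c"
    using \<alpha>(3) keys_c' q(1) unfolding \<beta>_def by auto
  ultimately show ?case by blast
qed

section \<open>Markers\<close>

lemma marker_cong:
  "(\<And>a. a \<in> {1..r} \<Longrightarrow> \<alpha> a = \<beta> a) \<Longrightarrow> marker m J r \<alpha> \<longleftrightarrow> marker m J r \<beta>"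
  unfolding marker_def mono_on_def by auto

definition marker_ext :: "nat \<Rightarrow> nat \<Rightarrow> (nat \<Rightarrow> nat) \<Rightarrow> (nat \<Rightarrow> nat) \<Rightarrow> nat \<Rightarrow> nat" where
  "marker_ext m r \<alpha> \<phi> a =
     (if a \<in> {1..r} then \<alpha> a else if a \<in> {1..m} then max (\<alpha> r) (\<phi> a) else 0)"

lemma marker_ext_in_hom_m:
  assumes "r \<le> m" "mono_on {1..r} \<alpha>" "\<phi> \<in> hom_m m"
  shows "marker_ext m r \<alpha> \<phi> \<in> hom_m m"
proof -
  have "marker_ext m r \<alpha> \<phi> x \<le> marker_ext m r \<alpha> \<phi> y"
    if xy: "x \<in> {1..m}" "y \<in> {1..m}" "x \<le> y" for x y
  proof -
    have "\<alpha> x \<le> \<alpha> y" if "y \<le> r" using that xy assms(2) by (auto intro: mono_onD)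
    moreover have "\<alpha> x \<le> \<alpha> r" if "x \<le> r" using that xy assms(2) by (auto intro: mono_onD)
    moreover have "\<phi> x \<le> \<phi> y" using xy assms(3) by (auto simp: hom_m_def intro: mono_onD)
    ultimately show ?thesis using xy unfolding marker_ext_def by auto
  qed
  then show ?thesis using assms(1) unfolding hom_m_def marker_ext_def mono_on_def by auto
qed

lemma below_marker_in_ideal:
  assumes J: "poset_ideal m J" and mk: "marker m J r \<alpha>" and \<phi>: "\<phi> \<in> hom_m m"
    and le: "\<forall>a\<in>{1..r}. \<phi> a \<le> \<alpha> a"
  shows "\<phi> \<in> J"
proof -
  have "marker_ext m r \<alpha> \<phi> \<in> J"
    using mk marker_ext_in_hom_m[OF _ _ \<phi>] unfolding marker_def by (auto simp: marker_ext_def)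
  moreover have "\<forall>a\<in>{1..m}. \<phi> a \<le> marker_ext m r \<alpha> \<phi> a"
    using le by (auto simp: marker_ext_def)
  ultimately show ?thesis using J \<phi> unfolding poset_ideal_def by blast
qed

lemma marker_lower:
  assumes "poset_ideal m J" "marker m J r \<alpha>" "mono_on {1..r} \<beta>" "\<forall>a\<in>{1..r}. \<beta> a \<le> \<alpha> a"
  shows "marker m J r \<beta>"
  using assms below_marker_in_ideal[OF assms(1,2)] unfolding marker_def by auto

definition marker_exps :: "nat \<Rightarrow> (nat \<Rightarrow> nat) set \<Rightarrow> (nat \<Rightarrow>\<^sub>0 nat) set" where
  "marker_exps m J = {seq_exp r \<alpha> | r \<alpha>. marker m J r \<alpha>}"

lemma Lp2_eq_marker_exps: "Lp2 m J = (ideal_gen (monom ` marker_exps m J) :: 'k::comm_ring_1 poly_ring set)"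
proof -
  have "{p2_gen r \<alpha> | r \<alpha>. marker m J r \<alpha>} = (monom ` marker_exps m J :: 'k poly_ring set)"
    unfolding marker_exps_def p2_gen_eq by auto
  then show ?thesis unfolding Lp2_def by simp
qed

lemma total_deg_marker_exps: "u \<in> marker_exps m J \<Longrightarrow> total_deg u \<le> m"
  unfolding marker_exps_def marker_def by auto

section \<open>Strong stability\<close>

lemma strongly_stable_ideal_genI:
  assumes exchange: "\<And>u i j. u \<in> U \<Longrightarrow> i < j \<Longrightarrow> j \<in> Poly_Mapping.keys u \<Longrightarrow>
    \<exists>v\<in>U. \<exists>w. u + var_exp i = v + w + var_exp j"
  shows "strongly_stable (ideal_gen (monom ` U) :: 'k::comm_ring_1 poly_ring set)"
  unfolding strongly_stable_def monomial_ideal_def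
proof (intro conjI allI impI)
  show "\<exists>V. ideal_gen (monom ` U) = (ideal_gen (monom ` V) :: 'k poly_ring set)" by blast
next
  fix x i j assume "i < j" and "(monom (x + var_exp j) :: 'k poly_ring) \<in> ideal_gen (monom ` U)"
  then obtain u w where u: "u \<in> U" and x: "x + var_exp j = u + w"
    by (auto simp: monom_in_ideal_gen_iff)
  show "(monom (x + var_exp i) :: 'k poly_ring) \<in> ideal_gen (monom ` U)"
  proof (cases "j \<in> Poly_Mapping.keys w")
    case True
    then have "x + var_exp j = (u + (w - var_exp j)) + var_exp j"
      using x add_var_exp_minus[OF True] by (simp add: ac_simps)
    then have "x = u + (w - var_exp j)" by (rule add_right_imp_eq)
    then have "x + var_exp i = u + (w - var_exp j + var_exp i)" by (simp add: ac_simps)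
    then show ?thesis using u by (auto simp: monom_in_ideal_gen_iff)
  next
    case False
    have "Poly_Mapping.lookup (u + w) j \<noteq> 0"
      unfolding x[symmetric] by (simp add: lookup_add lookup_var_exp)
    then have "j \<in> Poly_Mapping.keys u" using False by (simp add: lookup_add in_keys_iff)
    then obtain v w' where v: "v \<in> U" and uv: "u + var_exp i = v + w' + var_exp j"
      using exchange u \<open>i < j\<close> by blast
    have "(x + var_exp i) + var_exp j = (x + var_exp j) + var_exp i" by (simp add: ac_simps)
    also have "\<dots> = (u + var_exp i) + w" using x by (simp add: ac_simps)
    also have "\<dots> = (v + (w' + w)) + var_exp j" using uv by (simp add: ac_simps)
    finally have "x + var_exp i = v + (w' + w)" by simp
    then show ?thesis using v by (auto simp: monom_in_ideal_gen_iff)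
  qed
qed

text \<open>Lowering one entry of a marker and re-sorting gives a sequence that is pointwise
  smaller, hence again a marker.\<close>

lemma marker_exchange:
  assumes J: "poset_ideal m J" and mk: "marker m J r \<alpha>" and "i < j"
    and a: "a \<in> {1..r}" "\<alpha> a = j"
  obtains \<beta> where "marker m J r \<beta>" "seq_exp r \<beta> + var_exp j = seq_exp r \<alpha> + var_exp i"
proof -
  define \<gamma> where "\<gamma> = \<alpha>(a := i)"
  have \<gamma>: "seq_exp r \<gamma> + var_exp j = seq_exp r \<alpha> + var_exp i"
    using seq_exp_update[OF a(1), of \<alpha> i] a(2) unfolding \<gamma>_def by simp
  obtain \<beta> where \<beta>: "mono_on {1..r} \<beta>" "seq_exp r \<beta> = seq_exp r \<gamma>"
    using sorted_seq_exp_exists[of "seq_exp r \<gamma>" r] by auto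
  have "count_le r \<alpha> v \<le> count_le r \<beta> v" for v
  proof -
    have "count_le r \<alpha> v \<le> count_le r \<gamma> v"
      unfolding count_le_def by (rule card_mono) (use a \<open>i < j\<close> in \<open>auto simp: \<gamma>_def\<close>)
    also have "\<dots> = count_le r \<beta> v" unfolding count_le_eq_sum \<beta>(2) ..
    finally show ?thesis .
  qed
  then have "\<forall>b\<in>{1..r}. \<beta> b \<le> \<alpha> b"
    using sorted_le_if_count_le[OF \<beta>(1)] mk unfolding marker_def by blast
  then have "marker m J r \<beta>" using marker_lower[OF J mk \<beta>(1)] by blast
  then show thesis using that \<gamma> \<beta>(2) by simp
qed

lemma Lp2_strongly_stable:
  assumes "poset_ideal m J"
  shows "strongly_stable (Lp2 m J :: 'k::comm_ring_1 poly_ring set)"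
  unfolding Lp2_eq_marker_exps
proof (rule strongly_stable_ideal_genI)
  fix u i j assume "u \<in> marker_exps m J" "i < j" "j \<in> Poly_Mapping.keys u"
  then obtain r \<alpha> where mk: "marker m J r \<alpha>" and u: "u = seq_exp r \<alpha>"
    unfolding marker_exps_def by blast
  then have "card {a\<in>{1..r}. \<alpha> a = j} \<noteq> 0"
    using \<open>j \<in> Poly_Mapping.keys u\<close> by (simp add: in_keys_iff lookup_seq_exp)
  then obtain a where "a \<in> {1..r}" "\<alpha> a = j" by (metis (mono_tags, lifting) Collect_empty_eq card.empty)
  then obtain \<beta> where "marker m J r \<beta>" "seq_exp r \<beta> + var_exp j = u + var_exp i"
    using marker_exchange[OF assms mk \<open>i < j\<close>] u by metis
  then show "\<exists>v\<in>marker_exps m J. \<exists>w. u + var_exp i = v + w + var_exp j"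
    unfolding marker_exps_def by (metis (mono_tags, lifting) add_0 mem_Collect_eq add.right_neutral)
qed

section \<open>Finite generation\<close>

definition bounded_seqs :: "nat \<Rightarrow> nat \<Rightarrow> (nat \<Rightarrow> nat) set" where
  "bounded_seqs k T = {\<gamma>. \<forall>a. (a \<in> {1..k} \<longrightarrow> \<gamma> a < T) \<and> (a \<notin> {1..k} \<longrightarrow> \<gamma> a = 0)}"

lemma finite_bounded_seqs: "finite (bounded_seqs k T)"
  using finite_set_of_finite_funs[of "{1..k}" "{..<T}" 0] unfolding bounded_seqs_def by simp

definition non_markers :: "nat \<Rightarrow> (nat \<Rightarrow> nat) set \<Rightarrow> nat \<Rightarrow> nat \<Rightarrow> (nat \<Rightarrow> nat) set" where
  "non_markers m J k T = {\<gamma>\<in>bounded_seqs k T. mono_on {1..k} \<gamma> \<and> \<not> marker m J k \<gamma>}"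

definition non_marker_witness :: "nat \<Rightarrow> (nat \<Rightarrow> nat) set \<Rightarrow> nat \<Rightarrow> (nat \<Rightarrow> nat) \<Rightarrow> nat \<Rightarrow> nat" where
  "non_marker_witness m J k \<gamma> = (SOME \<phi>. \<phi> \<in> hom_m m \<and> (\<forall>a\<in>{1..k}. \<phi> a = \<gamma> a) \<and> \<phi> \<notin> J)"

text \<open>\<open>marker_bound m J (k + 1)\<close> exceeds the top value of the chosen witness \<open>\<phi> \<notin> J\<close> of every
  non-marker of length \<open>k\<close> with entries below \<open>marker_bound m J k\<close>.\<close>

primrec marker_bound :: "nat \<Rightarrow> (nat \<Rightarrow> nat) set \<Rightarrow> nat \<Rightarrow> nat" where
  "marker_bound m J 0 = 1"
| "marker_bound m J (Suc k) = max (marker_bound m J k)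
     (Suc (Max (insert 0 ((\<lambda>\<gamma>. non_marker_witness m J k \<gamma> m) ` non_markers m J k (marker_bound m J k)))))"

lemma marker_bound_mono: "k \<le> k' \<Longrightarrow> marker_bound m J k \<le> marker_bound m J k'"
  by (rule lift_Suc_mono_le[of "marker_bound m J"]) auto

lemma marker_bound_pos: "0 < marker_bound m J k"
  by (induction k) auto

lemma non_marker_witness:
  assumes "\<gamma> \<in> non_markers m J k T" "k \<le> m"
  shows "non_marker_witness m J k \<gamma> \<in> hom_m m" "\<forall>a\<in>{1..k}. non_marker_witness m J k \<gamma> a = \<gamma> a"
    "non_marker_witness m J k \<gamma> \<notin> J"
proof -
  have "\<exists>\<phi>. \<phi> \<in> hom_m m \<and> (\<forall>a\<in>{1..k}. \<phi> a = \<gamma> a) \<and> \<phi> \<notin> J"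
    using assms unfolding non_markers_def marker_def by blast
  from someI_ex[OF this] show "non_marker_witness m J k \<gamma> \<in> hom_m m"
    "\<forall>a\<in>{1..k}. non_marker_witness m J k \<gamma> a = \<gamma> a" "non_marker_witness m J k \<gamma> \<notin> J"
    unfolding non_marker_witness_def by blast+
qed

lemma marker_prefix:
  assumes J: "poset_ideal m J" and mk: "marker m J r \<alpha>" and "k < r"
    and bounded: "\<forall>a\<in>{1..k}. \<alpha> a < marker_bound m J k"
    and big: "marker_bound m J (Suc k) \<le> \<alpha> (Suc k)"
  shows "marker m J k \<alpha>"
proof (rule ccontr)
  assume not_marker: "\<not> marker m J k \<alpha>"
  have "r \<le> m" and mono: "mono_on {1..r} \<alpha>" using mk unfolding marker_def by auto
  define \<gamma> where "\<gamma> a = (if a \<in> {1..k} then \<alpha> a else 0)" for a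
  have \<gamma>: "\<gamma> \<in> non_markers m J k (marker_bound m J k)"
    using bounded not_marker marker_cong[of k \<gamma> \<alpha>] mono_on_subset[OF mono, of "{1..k}"] \<open>k < r\<close>
    unfolding non_markers_def bounded_seqs_def \<gamma>_def mono_on_def by auto
  define \<phi> where "\<phi> = non_marker_witness m J k \<gamma>"
  have \<phi>: "\<phi> \<in> hom_m m" "\<forall>a\<in>{1..k}. \<phi> a = \<alpha> a" "\<phi> \<notin> J"
    using non_marker_witness[OF \<gamma>] \<open>k < r\<close> \<open>r \<le> m\<close> unfolding \<phi>_def \<gamma>_def by auto
  have "\<phi> m \<le> Max (insert 0 ((\<lambda>\<gamma>. non_marker_witness m J k \<gamma> m) ` non_markers m J k (marker_bound m J k)))"
    unfolding \<phi>_def using \<gamma> finite_bounded_seqs by (intro Max_ge) (auto simp: non_markers_def)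
  then have top: "\<phi> m < \<alpha> (Suc k)" using big by simp
  have "\<phi> a \<le> \<alpha> a" if a: "a \<in> {1..r}" for a
  proof (cases "a \<le> k")
    case False
    have "\<phi> a \<le> \<phi> m" using \<phi>(1) a \<open>r \<le> m\<close> unfolding hom_m_def by (auto intro: mono_onD)
    also have "\<dots> < \<alpha> (Suc k)" by (rule top)
    also have "\<dots> \<le> \<alpha> a" using mono a False by (auto intro: mono_onD)
    finally show ?thesis by simp
  qed (use \<phi>(2) a in auto)
  then have "\<phi> \<in> J" using below_marker_in_ideal[OF J mk \<phi>(1)] by blast
  with \<phi>(3) show False ..
qed

lemma marker_truncate:
  assumes J: "poset_ideal m J" and mk: "marker m J r \<alpha>"
  shows "\<exists>k\<le>r. marker m J k \<alpha> \<and> (\<forall>a\<in>{1..k}. \<alpha> a < marker_bound m J k)"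
proof -
  let ?goal = "\<exists>k\<le>r. marker m J k \<alpha> \<and> (\<forall>a\<in>{1..k}. \<alpha> a < marker_bound m J k)"
  have "?goal \<or> (\<forall>a\<in>{1..k}. \<alpha> a < marker_bound m J k)" if "k \<le> r" for k
    using that
  proof (induction k)
    case (Suc k)
    then consider ?goal | (bounded) "\<forall>a\<in>{1..k}. \<alpha> a < marker_bound m J k" by fastforce
    then show ?case
    proof cases
      case bounded
      show ?thesis
      proof (cases "\<alpha> (Suc k) < marker_bound m J (Suc k)")
        case True
        have "\<forall>a\<in>{1..k}. \<alpha> a < marker_bound m J (Suc k)"
          using bounded marker_bound_mono[of k "Suc k" m J] by fastforce
        then show ?thesis using True by (auto simp: atLeastAtMostSuc_conv)
      next
        case False
        then have "marker m J k \<alpha>"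
          using marker_prefix[OF J mk _ bounded] Suc.prems by (metis Suc_le_eq not_less)
        moreover have "k \<le> r" using Suc.prems by simp
        ultimately show ?thesis using bounded by blast
      qed
    qed simp
  qed simp
  from this[of r] mk show ?thesis by auto
qed

definition bounded_marker_exps :: "nat \<Rightarrow> (nat \<Rightarrow> nat) set \<Rightarrow> (nat \<Rightarrow>\<^sub>0 nat) set" where
  "bounded_marker_exps m J =
     {seq_exp k \<alpha> | k \<alpha>. marker m J k \<alpha> \<and> (\<forall>a\<in>{1..k}. \<alpha> a < marker_bound m J m)}"

lemma finite_bounded_marker_exps: "finite (bounded_marker_exps m J)"
proof -
  let ?T = "marker_bound m J m"
  have "bounded_marker_exps m J \<subseteq> (\<lambda>(k, \<gamma>). seq_exp k \<gamma>) ` ({0..m} \<times> bounded_seqs m ?T)"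
  proof
    fix u assume "u \<in> bounded_marker_exps m J"
    then obtain k \<alpha> where u: "u = seq_exp k \<alpha>" "marker m J k \<alpha>" "\<forall>a\<in>{1..k}. \<alpha> a < ?T"
      unfolding bounded_marker_exps_def by blast
    define \<gamma> where "\<gamma> a = (if a \<in> {1..k} then \<alpha> a else 0)" for a
    have "k \<le> m" using u(2) unfolding marker_def by simp
    then have "(k, \<gamma>) \<in> {0..m} \<times> bounded_seqs m ?T"
      using u(3) marker_bound_pos[of m J m] unfolding bounded_seqs_def \<gamma>_def by auto
    moreover have "u = seq_exp k \<gamma>" using u(1) seq_exp_cong[of k \<gamma> \<alpha>] by (simp add: \<gamma>_def)
    ultimately show "u \<in> (\<lambda>(k, \<gamma>). seq_exp k \<gamma>) ` ({0..m} \<times> bounded_seqs m ?T)" by force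
  qed
  then show ?thesis by (rule finite_subset) (simp add: finite_bounded_seqs)
qed

lemma Lp2_eq_bounded_marker_exps:
  assumes J: "poset_ideal m J"
  shows "Lp2 m J = (ideal_gen (monom ` bounded_marker_exps m J) :: 'k::comm_ring_1 poly_ring set)"
  unfolding Lp2_eq_marker_exps
proof (rule ideal_gen_monom_eqI)
  fix u assume "u \<in> marker_exps m J"
  then obtain r \<alpha> where u: "u = seq_exp r \<alpha>" "marker m J r \<alpha>" unfolding marker_exps_def by blast
  obtain k where k: "k \<le> r" "marker m J k \<alpha>" "\<forall>a\<in>{1..k}. \<alpha> a < marker_bound m J k"
    using marker_truncate[OF J u(2)] by blast
  have "marker_bound m J k \<le> marker_bound m J m"
    using k(1) u(2) by (intro marker_bound_mono) (simp add: marker_def)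
  then have "seq_exp k \<alpha> \<in> bounded_marker_exps m J"
    using k(2,3) unfolding bounded_marker_exps_def by fastforce
  then show "\<exists>v\<in>bounded_marker_exps m J. \<exists>w. u = v + w"
    using seq_exp_split[OF k(1)] u(1) by blast
next
  fix v assume "v \<in> bounded_marker_exps m J"
  then have "v \<in> marker_exps m J" unfolding bounded_marker_exps_def marker_exps_def by blast
  then show "\<exists>u\<in>marker_exps m J. \<exists>w. v = u + w" by (metis add.right_neutral)
qed

lemma Lp2_fin_gen:
  assumes "poset_ideal m J"
  shows "fin_gen (Lp2 m J :: 'k::comm_ring_1 poly_ring set)"
  unfolding fin_gen_def
  using Lp2_eq_bounded_marker_exps[OF assms] finite_bounded_marker_exps by blast

section \<open>A contracting homotopy of the Koszul complex\<close>

definition lin_ext :: "('a \<Rightarrow> 'b::zero \<Rightarrow> 'c::comm_monoid_add) \<Rightarrow> ('a \<Rightarrow>\<^sub>0 'b) \<Rightarrow> 'c" where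
  "lin_ext T y = (\<Sum>G\<in>Poly_Mapping.keys y. T G (Poly_Mapping.lookup y G))"

lemma lin_ext_zero [simp]: "lin_ext T 0 = 0"
  unfolding lin_ext_def by simp

lemma keys_lin_ext:
  "Poly_Mapping.keys (lin_ext T y)
    \<subseteq> (\<Union>G\<in>Poly_Mapping.keys y. Poly_Mapping.keys (T G (Poly_Mapping.lookup y G)))"
  unfolding lin_ext_def by (rule keys_sum)

definition coeff_additive :: "('a \<Rightarrow> 'b::plus \<Rightarrow> 'c::plus) \<Rightarrow> bool" where
  "coeff_additive T = (\<forall>G a b. T G (a + b) = T G a + T G b)"

context
  fixes T :: "'a \<Rightarrow> 'b::comm_monoid_add \<Rightarrow> 'c::cancel_comm_monoid_add"
  assumes additive: "coeff_additive T"
begin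

lemma coeff_additive_zero: "T G 0 = 0"
  using additive unfolding coeff_additive_def by (metis add.right_neutral add_left_cancel)

lemma lin_ext_superset:
  assumes "finite S" "Poly_Mapping.keys y \<subseteq> S"
  shows "lin_ext T y = (\<Sum>G\<in>S. T G (Poly_Mapping.lookup y G))"
  unfolding lin_ext_def
  by (rule sum.mono_neutral_left) (use assms coeff_additive_zero in \<open>auto simp: in_keys_iff\<close>)

lemma lin_ext_add: "lin_ext T (x + y) = lin_ext T x + lin_ext T y"
proof -
  let ?S = "Poly_Mapping.keys x \<union> Poly_Mapping.keys y"
  have "lin_ext T (x + y) = (\<Sum>G\<in>?S. T G (Poly_Mapping.lookup (x + y) G))"
    using lin_ext_superset[OF _ keys_add] by simp
  also have "\<dots> = (\<Sum>G\<in>?S. T G (Poly_Mapping.lookup x G)) + (\<Sum>G\<in>?S. T G (Poly_Mapping.lookup y G))"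
    using additive unfolding coeff_additive_def by (simp add: lookup_add sum.distrib)
  also have "\<dots> = lin_ext T x + lin_ext T y"
    using lin_ext_superset[of ?S x] lin_ext_superset[of ?S y] by simp
  finally show ?thesis .
qed

lemma lin_ext_single [simp]: "lin_ext T (Poly_Mapping.single G c) = T G c"
  by (cases "c = 0") (simp_all add: lin_ext_def coeff_additive_zero)

lemma lin_ext_sum: "lin_ext T (\<Sum>x\<in>A. f x) = (\<Sum>x\<in>A. lin_ext T (f x))"
  by (induction A rule: infinite_finite_induct) (simp_all add: lin_ext_add lin_ext_zero)

end

lemma lin_ext_homotopy:
  fixes T1 T2 :: "'a \<Rightarrow> 'b::ab_group_add \<Rightarrow> ('a \<Rightarrow>\<^sub>0 'b)"
  assumes T1: "coeff_additive T1" and T2: "coeff_additive T2"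
    and single: "\<And>G. G \<in> Poly_Mapping.keys z \<Longrightarrow>
      lin_ext T1 (T2 G (Poly_Mapping.lookup z G)) + lin_ext T2 (T1 G (Poly_Mapping.lookup z G))
      = Poly_Mapping.single G (Poly_Mapping.lookup z G)"
  shows "lin_ext T1 (lin_ext T2 z) + lin_ext T2 (lin_ext T1 z) = z"
proof -
  have "lin_ext T1 (lin_ext T2 z) + lin_ext T2 (lin_ext T1 z) = (\<Sum>G\<in>Poly_Mapping.keys z.
      lin_ext T1 (T2 G (Poly_Mapping.lookup z G)) + lin_ext T2 (T1 G (Poly_Mapping.lookup z G)))"
    unfolding lin_ext_def[of T2 z] lin_ext_def[of T1 z] lin_ext_sum[OF T1] lin_ext_sum[OF T2]
    by (simp add: sum.distrib)
  also have "\<dots> = (\<Sum>G\<in>Poly_Mapping.keys z. Poly_Mapping.single G (Poly_Mapping.lookup z G))"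
    using single by (rule sum.cong[OF refl])
  also have "\<dots> = z" by (rule expand_poly_mapping[symmetric])
  finally show ?thesis .
qed

definition koszul_sign :: "nat set \<Rightarrow> nat \<Rightarrow> 'k::comm_ring_1" where
  "koszul_sign F j = (-1) ^ card {l\<in>F. l < j}"

definition koszul_d :: "nat set \<Rightarrow> 'k::comm_ring_1 \<Rightarrow> (nat set \<Rightarrow>\<^sub>0 'k)" where
  "koszul_d F c = (\<Sum>j\<in>F. Poly_Mapping.single (F - {j}) (koszul_sign F j * c))"

text \<open>\<open>koszul_h q\<close> is left multiplication by \<open>e\<^sub>q\<close>. As the Koszul differential is a derivation
  with \<open>d e\<^sub>q = x\<^sub>q\<close>, \<open>d h + h d\<close> is multiplication by \<open>x\<^sub>q\<close>, which in a fixed multidegree is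
  the identity on chains \<open>e\<^sub>F\<close> with \<open>F \<subseteq> {..q}\<close>.\<close>

definition koszul_h :: "nat \<Rightarrow> nat set \<Rightarrow> 'k::comm_ring_1 \<Rightarrow> (nat set \<Rightarrow>\<^sub>0 'k)" where
  "koszul_h q G c = (if q \<in> G then 0 else Poly_Mapping.single (insert q G) ((-1) ^ card G * c))"

lemma coeff_additive_koszul_d: "coeff_additive koszul_d"
  unfolding coeff_additive_def koszul_d_def by (simp add: distrib_left single_add sum.distrib)

lemma coeff_additive_koszul_h: "coeff_additive (koszul_h q)"
  unfolding coeff_additive_def koszul_h_def by (simp add: distrib_left single_add)

lemma koszul_diff_eq_lin_ext: "koszul_diff f = lin_ext koszul_d f"
  unfolding koszul_diff_def lin_ext_def koszul_d_def koszul_sign_def ..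

lemma koszul_homotopy_single_mem:
  assumes "finite F" "q \<in> F" "\<forall>x\<in>F. x \<le> q"
  shows "lin_ext koszul_d (koszul_h q F c) + lin_ext (koszul_h q) (koszul_d F c)
    = Poly_Mapping.single F (c::'k::comm_ring_1)"
proof -
  have "lin_ext (koszul_h q) (koszul_d F c) = (\<Sum>j\<in>F. koszul_h q (F - {j}) (koszul_sign F j * c))"
    unfolding koszul_d_def lin_ext_sum[OF coeff_additive_koszul_h]
    by (simp add: coeff_additive_koszul_h)
  also have "\<dots> = koszul_h q (F - {q}) (koszul_sign F q * c)"
    using assms(1,2) by (subst sum.remove[of _ q]) (auto simp: koszul_h_def)
  also have "\<dots> = Poly_Mapping.single F c"
  proof -
    have "{l\<in>F. l < q} = F - {q}" using assms(3) by force
    then have "koszul_sign F q = ((-1) ^ card (F - {q}) :: 'k)" unfolding koszul_sign_def by simp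
    then show ?thesis using assms(2) by (simp add: koszul_h_def insert_absorb)
  qed
  finally show ?thesis using assms(2) by (simp add: koszul_h_def)
qed

lemma koszul_homotopy_single_not_mem:
  assumes "finite F" "q \<notin> F" "\<forall>x\<in>F. x \<le> q"
  shows "lin_ext koszul_d (koszul_h q F c) + lin_ext (koszul_h q) (koszul_d F c)
    = Poly_Mapping.single F (c::'k::comm_ring_1)"
proof -
  let ?x = "(-1::'k) ^ card F * c"
  let ?t = "\<lambda>j. Poly_Mapping.single (insert q (F - {j})) (koszul_sign F j * ?x)"
  have lt: "j < q" if "j \<in> F" for j using that assms(2,3) by (metis order_le_less)
  have sign_q: "koszul_sign (insert q F) q * ?x = c"
  proof -
    have "{l\<in>insert q F. l < q} = F" using lt by auto
    then show ?thesis unfolding koszul_sign_def by simp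
  qed
  have sum_eq: "(\<Sum>j\<in>F. Poly_Mapping.single (insert q F - {j}) (koszul_sign (insert q F) j * ?x))
      = sum ?t F"
  proof (rule sum.cong[OF refl])
    fix j assume "j \<in> F"
    then have "{l\<in>insert q F. l < j} = {l\<in>F. l < j}" "insert q F - {j} = insert q (F - {j})"
      using lt[of j] by auto
    then show "Poly_Mapping.single (insert q F - {j}) (koszul_sign (insert q F) j * ?x) = ?t j"
      unfolding koszul_sign_def by simp
  qed
  have "lin_ext koszul_d (koszul_h q F c) = koszul_d (insert q F) ?x"
    using assms(2) by (simp add: koszul_h_def coeff_additive_koszul_d)
  also have "\<dots> = Poly_Mapping.single F c + sum ?t F"
    unfolding koszul_d_def sum.insert[OF assms(1,2)] sum_eq sign_q
    using assms(2) by (simp add: Diff_insert_absorb)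
  finally have dh: "lin_ext koszul_d (koszul_h q F c) = Poly_Mapping.single F c + sum ?t F" .
  have "lin_ext (koszul_h q) (koszul_d F c) = (\<Sum>j\<in>F. koszul_h q (F - {j}) (koszul_sign F j * c))"
    unfolding koszul_d_def lin_ext_sum[OF coeff_additive_koszul_h]
      lin_ext_single[OF coeff_additive_koszul_h] ..
  also have "\<dots> = (\<Sum>j\<in>F. - ?t j)"
  proof (rule sum.cong[OF refl])
    fix j assume "j \<in> F"
    obtain n where "card (F - {j}) = n" "card F = Suc n"
      using \<open>j \<in> F\<close> assms(1) by (metis card_Suc_Diff1)
    then show "koszul_h q (F - {j}) (koszul_sign F j * c) = - ?t j"
      using assms(2) by (simp add: koszul_h_def mult.left_commute flip: single_uminus)
  qed
  also have "\<dots> = - sum ?t F" by (rule sum_negf)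
  finally show ?thesis using dh by simp
qed

lemma koszul_homotopy:
  assumes "\<And>G. G \<in> Poly_Mapping.keys z \<Longrightarrow> finite G \<and> (\<forall>x\<in>G. x \<le> q)"
  shows "lin_ext koszul_d (lin_ext (koszul_h q) z) + lin_ext (koszul_h q) (lin_ext koszul_d z)
    = (z :: nat set \<Rightarrow>\<^sub>0 'k::comm_ring_1)"
proof (rule lin_ext_homotopy[OF coeff_additive_koszul_d coeff_additive_koszul_h])
  fix G assume "G \<in> Poly_Mapping.keys z"
  then have "finite G" "\<forall>x\<in>G. x \<le> q" using assms by auto
  then show "lin_ext koszul_d (koszul_h q G (Poly_Mapping.lookup z G))
      + lin_ext (koszul_h q) (koszul_d G (Poly_Mapping.lookup z G))
      = Poly_Mapping.single G (Poly_Mapping.lookup z G)"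
    by (cases "q \<in> G") (blast intro: koszul_homotopy_single_mem koszul_homotopy_single_not_mem)+
qed

section \<open>Vanishing of Betti numbers\<close>

lemma lookup_kscale: "Poly_Mapping.lookup (kscale c f) G = c * Poly_Mapping.lookup f G"
  unfolding kscale_def Poly_Mapping.map.rep_eq by (simp add: when_def)

interpretation V: vector_space "kscale :: 'k::field \<Rightarrow> (nat set \<Rightarrow>\<^sub>0 'k) \<Rightarrow> _"
  by unfold_locales (auto intro!: poly_mapping_eqI simp: lookup_kscale lookup_add algebra_simps)

lemma in_span_singles:
  assumes "Poly_Mapping.keys (y :: nat set \<Rightarrow>\<^sub>0 'k::field) \<subseteq> S"
  shows "y \<in> V.span ((\<lambda>G. Poly_Mapping.single G 1) ` S)"
proof -
  have single_eq: "kscale c (Poly_Mapping.single G 1) = Poly_Mapping.single G (c::'k)" for c G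
    by (intro poly_mapping_eqI) (simp add: lookup_kscale lookup_single when_def)
  have "y = (\<Sum>G\<in>Poly_Mapping.keys y. kscale (Poly_Mapping.lookup y G) (Poly_Mapping.single G 1))"
    using expand_poly_mapping[of y] by (simp add: single_eq)
  also have "\<dots> \<in> V.span ((\<lambda>G. Poly_Mapping.single G 1) ` S)"
    using assms by (intro V.span_sum V.span_scale V.span_base) auto
  finally show ?thesis .
qed

lemma (in vector_space) dim_le_dim_if_subset_span:
  assumes "S \<subseteq> T" "T \<subseteq> span W" "finite W"
  shows "dim S \<le> dim T"
proof -
  obtain B where B: "B \<subseteq> T" "independent B" "T \<subseteq> span B" "card B = dim T"
    using basis_exists by blast
  have "finite B" using independent_span_bound[OF assms(3) B(2)] B(1) assms(2) by blast
  then show ?thesis using dim_le_card[of S B] assms(1) B(3,4) by auto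
qed

lemma strongly_stableD:
  "strongly_stable I \<Longrightarrow> i < j \<Longrightarrow> monom (u + var_exp j) \<in> I \<Longrightarrow> monom (u + var_exp i) \<in> I"
  unfolding strongly_stable_def by blast

lemma strongly_stable_minus_max_var:
  assumes I: "I = ideal_gen (monom ` U :: 'k::comm_ring_1 poly_ring set)"
    and deg: "\<forall>u\<in>U. total_deg u \<le> m" and ss: "strongly_stable I"
    and c: "monom c \<in> I" "m < total_deg c"
    and q: "q \<in> Poly_Mapping.keys c" "\<forall>x\<in>Poly_Mapping.keys c. x \<le> q"
  shows "monom (c - var_exp q) \<in> I"
proof -
  obtain u w where u: "u \<in> U" and c_eq: "c = u + w"
    using c(1) unfolding I monom_in_ideal_gen_iff by blast
  have "w \<noteq> 0" using deg u c(2) c_eq by (auto simp: total_deg_add)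
  show ?thesis
  proof (cases "q \<in> Poly_Mapping.keys w")
    case True
    then have "c - var_exp q = u + (w - var_exp q)"
      using c_eq by (intro poly_mapping_eqI) (auto simp: lookup_add lookup_minus lookup_var_exp in_keys_iff)
    then show ?thesis unfolding I monom_in_ideal_gen_iff using u by blast
  next
    case False
    obtain p where p: "p \<in> Poly_Mapping.keys w" using \<open>w \<noteq> 0\<close> by fastforce
    then have "p \<in> Poly_Mapping.keys c" using c_eq by (auto simp: in_keys_iff lookup_add)
    then have "p < q" using q(2) p False by (metis order_le_less)
    have uq: "q \<in> Poly_Mapping.keys u" using q(1) False c_eq by (auto simp: in_keys_iff lookup_add)
    have "monom ((u - var_exp q) + var_exp q) \<in> I"
      using u add_var_exp_minus[OF uq] unfolding I monom_in_ideal_gen_iff by (metis add.right_neutral)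
    then have "monom ((u - var_exp q) + var_exp p) \<in> I" using strongly_stableD[OF ss \<open>p < q\<close>] by blast
    then have "monom ((u - var_exp q) + var_exp p + (w - var_exp p)) \<in> I"
      unfolding I by (rule monom_add_in_ideal_gen)
    moreover have "(u - var_exp q) + var_exp p + (w - var_exp p) = c - var_exp q"
      using uq p c_eq
      by (intro poly_mapping_eqI) (auto simp: lookup_add lookup_minus lookup_var_exp in_keys_iff)
    ultimately show ?thesis by simp
  qed
qed

lemma lookup_sq_exp: "finite F \<Longrightarrow> Poly_Mapping.lookup (sq_exp F) k = (if k \<in> F then 1 else 0)"
  unfolding sq_exp_def lookup_sum var_exp_def by (simp add: lookup_single when_def)

lemma total_deg_sq_exp:
  assumes "finite F"
  shows "total_deg (sq_exp F) = card F"
proof -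
  have "Poly_Mapping.keys (sq_exp F) \<subseteq> F"
    using assms by (auto simp: in_keys_iff lookup_sq_exp split: if_splits)
  then show ?thesis using total_deg_superset[of F "sq_exp F"] assms by (simp add: lookup_sq_exp)
qed

lemma koszul_basisD:
  assumes "F \<in> koszul_basis I n b i"
  shows "finite F" "F \<subseteq> Poly_Mapping.keys b" "F \<subseteq> {0..<n}" "card F = i"
    "\<exists>c. b = c + sq_exp F \<and> monom c \<in> I"
proof -
  show fin: "finite F" using assms unfolding koszul_basis_def by (auto intro: finite_subset)
  show "F \<subseteq> {0..<n}" "card F = i" "\<exists>c. b = c + sq_exp F \<and> monom c \<in> I"
    using assms unfolding koszul_basis_def by auto
  then show "F \<subseteq> Poly_Mapping.keys b"
    using fin by (auto simp: in_keys_iff lookup_add lookup_sq_exp)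
qed

text \<open>Stability is what makes \<open>koszul_h q\<close> preserve the chains of the Koszul complex of \<open>I\<close>.\<close>

lemma koszul_basis_insert_max:
  assumes I: "I = ideal_gen (monom ` U :: 'k::comm_ring_1 poly_ring set)"
    and deg: "\<forall>u\<in>U. total_deg u \<le> m" and ss: "strongly_stable I"
    and b: "Poly_Mapping.keys b \<subseteq> {0..<n}" "m + i < total_deg b"
    and q: "q \<in> Poly_Mapping.keys b" "\<forall>x\<in>Poly_Mapping.keys b. x \<le> q"
    and F: "F \<in> koszul_basis I n b i" "q \<notin> F"
  shows "insert q F \<in> koszul_basis I n b (Suc i)"
proof -
  note F_props = koszul_basisD[OF F(1)]
  obtain c where c: "b = c + sq_exp F" "monom c \<in> I" using F_props(5) by blast
  have lookup_b: "Poly_Mapping.lookup b x = Poly_Mapping.lookup c x + (if x \<in> F then 1 else 0)" for x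
    using c(1) F_props(1) by (simp add: lookup_add lookup_sq_exp)
  have "total_deg b = total_deg c + i" using c(1) F_props(1,4) by (simp add: total_deg_add total_deg_sq_exp)
  then have "m < total_deg c" using b(2) by simp
  moreover have "q \<in> Poly_Mapping.keys c" using q(1) F(2) lookup_b[of q] by (simp add: in_keys_iff)
  moreover have "\<forall>x\<in>Poly_Mapping.keys c. x \<le> q" using q(2) lookup_b by (auto simp: in_keys_iff)
  ultimately have "monom (c - var_exp q) \<in> I"
    using strongly_stable_minus_max_var[OF I deg ss c(2)] by blast
  moreover have "b = (c - var_exp q) + sq_exp (insert q F)"
    using lookup_b \<open>q \<in> Poly_Mapping.keys c\<close> F_props(1) F(2)
    by (intro poly_mapping_eqI)
      (auto simp: lookup_add lookup_minus lookup_var_exp lookup_sq_exp in_keys_iff)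
  moreover have "insert q F \<subseteq> {0..<n}" "card (insert q F) = Suc i"
    using F_props(1,3,4) F(2) q(1) b(1) by auto
  ultimately show ?thesis unfolding koszul_basis_def by blast
qed

lemma koszul_h_chains:
  assumes I: "I = ideal_gen (monom ` U :: 'k::field poly_ring set)"
    and deg: "\<forall>u\<in>U. total_deg u \<le> m" and ss: "strongly_stable I"
    and b: "Poly_Mapping.keys b \<subseteq> {0..<n}" "m + i < total_deg b"
    and q: "q \<in> Poly_Mapping.keys b" "\<forall>x\<in>Poly_Mapping.keys b. x \<le> q"
    and z: "z \<in> koszul_chains I n b i"
  shows "lin_ext (koszul_h q) z \<in> koszul_chains I n b (Suc i)"
proof -
  have "Poly_Mapping.keys (koszul_h q G (Poly_Mapping.lookup z G)) \<subseteq> koszul_basis I n b (Suc i)"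
    if "G \<in> Poly_Mapping.keys z" for G
  proof (cases "q \<in> G")
    case False
    have "G \<in> koszul_basis I n b i" using z that unfolding koszul_chains_def by blast
    then show ?thesis
      using koszul_basis_insert_max[OF I deg ss b q _ False] False by (simp add: koszul_h_def)
  qed (simp add: koszul_h_def)
  then show ?thesis using keys_lin_ext[of "koszul_h q" z] unfolding koszul_chains_def by blast
qed

lemma keys_koszul_diff:
  assumes "f \<in> koszul_chains I n b j"
  shows "Poly_Mapping.keys (koszul_diff f) \<subseteq> Pow {0..<n}"
proof -
  have "Poly_Mapping.keys (koszul_d F (Poly_Mapping.lookup f F)) \<subseteq> Pow {0..<n}"
    if "F \<in> Poly_Mapping.keys f" for F
  proof -
    have "F \<subseteq> {0..<n}" using that assms koszul_basisD(3) unfolding koszul_chains_def by blast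
    have "Poly_Mapping.keys (koszul_d F (Poly_Mapping.lookup f F)) \<subseteq>
        (\<Union>j\<in>F. Poly_Mapping.keys (Poly_Mapping.single (F - {j}) (koszul_sign F j * Poly_Mapping.lookup f F)))"
      unfolding koszul_d_def by (rule keys_sum)
    also have "\<dots> \<subseteq> Pow {0..<n}" using \<open>F \<subseteq> {0..<n}\<close> by auto
    finally show ?thesis .
  qed
  then show ?thesis unfolding koszul_diff_eq_lin_ext using keys_lin_ext[of koszul_d f] by blast
qed

lemma betti_eq_0_if_degree_gt:
  assumes I: "I = ideal_gen (monom ` U :: 'k::field poly_ring set)"
    and deg: "\<forall>u\<in>U. total_deg u \<le> m" and ss: "strongly_stable I"
    and b: "Poly_Mapping.keys b \<subseteq> {0..<n}" "m + i < total_deg b"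
  shows "betti I n i b = 0"
proof -
  define q where "q = Max (Poly_Mapping.keys b)"
  have "b \<noteq> 0" using b(2) by auto
  then have q: "q \<in> Poly_Mapping.keys b" "\<forall>x\<in>Poly_Mapping.keys b. x \<le> q"
    unfolding q_def by auto
  define cycles where "cycles = koszul_chains I n b i \<inter> {f. koszul_diff f = 0}"
  define boundaries where "boundaries = koszul_diff ` koszul_chains I n b (Suc i)"
  \<comment> \<open>As \<open>betti\<close> is a truncated difference of dimensions, this inclusion suffices.\<close>
  have "cycles \<subseteq> boundaries"
  proof
    fix z assume "z \<in> cycles"
    then have z: "z \<in> koszul_chains I n b i" "lin_ext koszul_d z = 0"
      unfolding cycles_def koszul_diff_eq_lin_ext by auto
    have "\<And>G. G \<in> Poly_Mapping.keys z \<Longrightarrow> finite G \<and> (\<forall>x\<in>G. x \<le> q)"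
      using z(1) koszul_basisD(1,2) q(2) unfolding koszul_chains_def by blast
    from koszul_homotopy[of z q, OF this] z(2) have "z = koszul_diff (lin_ext (koszul_h q) z)"
      unfolding koszul_diff_eq_lin_ext by simp
    then show "z \<in> boundaries"
      unfolding boundaries_def using koszul_h_chains[OF I deg ss b q z(1)] by blast
  qed
  moreover have "boundaries \<subseteq> V.span ((\<lambda>G. Poly_Mapping.single G 1) ` Pow {0..<n})"
    unfolding boundaries_def using in_span_singles[OF keys_koszul_diff] by blast
  ultimately have "V.dim cycles \<le> V.dim boundaries"
    by (intro V.dim_le_dim_if_subset_span) auto
  then show ?thesis unfolding betti_def cycles_def[symmetric] boundaries_def[symmetric] by simp
qed

theorem Lp2_m_regular:
  assumes "poset_ideal m J"
  shows "m_regular m (Lp2 m J :: 'k::field poly_ring set)"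
proof -
  note ss = Lp2_strongly_stable[OF assms, where 'k='k]
  have "betti (Lp2 m J :: 'k poly_ring set) n i b = 0"
    if "Poly_Mapping.keys b \<subseteq> {0..<n}" "m + i < total_deg b" for n i b
    using betti_eq_0_if_degree_gt[OF Lp2_eq_marker_exps _ ss that] total_deg_marker_exps by blast
  moreover have "monomial_ideal (Lp2 m J :: 'k poly_ring set)"
    using ss unfolding strongly_stable_def by blast
  ultimately show ?thesis
    unfolding m_regular_def using Lp2_fin_gen[OF assms] by (meson not_le)
qed

section \<open>The inverse correspondence\<close>

lemma strongly_stable_lower_entry:
  assumes ss: "strongly_stable I" and mem: "monom (seq_exp r f) \<in> I"
    and a: "a \<in> {1..r}" and "v \<le> f a"
  shows "monom (seq_exp r (f(a := v))) \<in> I"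
proof (cases "v = f a")
  case False
  then have "v < f a" using \<open>v \<le> f a\<close> by simp
  have "f a \<in> Poly_Mapping.keys (seq_exp r f)" using a by (auto simp: in_keys_iff lookup_seq_exp)
  define u where "u = seq_exp r f - var_exp (f a)"
  have u: "seq_exp r f = u + var_exp (f a)"
    unfolding u_def by (rule add_var_exp_minus) fact
  then have "monom (u + var_exp v) \<in> I" using strongly_stableD[OF ss \<open>v < f a\<close>] mem by simp
  moreover have "seq_exp r (f(a := v)) + var_exp (f a) = (u + var_exp v) + var_exp (f a)"
    using seq_exp_update[OF a, of f v] u by (simp add: ac_simps)
  then have "seq_exp r (f(a := v)) = u + var_exp v" by (rule add_right_imp_eq)
  ultimately show ?thesis by simp
qed (use mem in simp)

lemma strongly_stable_lower_seq:
  assumes ss: "strongly_stable I" and mem: "monom (seq_exp r \<phi>) \<in> I"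
    and le: "\<forall>a\<in>{1..r}. \<psi> a \<le> \<phi> a"
  shows "monom (seq_exp r \<psi>) \<in> I"
proof -
  have "monom (seq_exp r (\<lambda>a. if a \<in> S then \<psi> a else \<phi> a)) \<in> I" if "S \<subseteq> {1..r}" for S
  proof -
    have "finite S" using that finite_subset by blast
    then show ?thesis using that
    proof (induction S rule: finite_induct)
      case (insert a S)
      let ?f = "\<lambda>b. if b \<in> S then \<psi> b else \<phi> b"
      have "a \<in> {1..r}" using insert.prems by simp
      moreover have "monom (seq_exp r ?f) \<in> I" using insert.IH insert.prems by simp
      moreover have "\<psi> a \<le> ?f a" using insert.hyps(2) le \<open>a \<in> {1..r}\<close> by simp
      ultimately have "monom (seq_exp r (?f(a := \<psi> a))) \<in> I"
        using strongly_stable_lower_entry[OF ss] by blast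
      moreover have "?f(a := \<psi> a) = (\<lambda>b. if b \<in> insert a S then \<psi> b else \<phi> b)" by auto
      ultimately show ?case by simp
    qed (simp add: mem)
  qed
  then have "monom (seq_exp r (\<lambda>a. if a \<in> {1..r} then \<psi> a else \<phi> a)) \<in> I" by blast
  moreover have "seq_exp r (\<lambda>a. if a \<in> {1..r} then \<psi> a else \<phi> a) = seq_exp r \<psi>"
    by (rule seq_exp_cong) simp
  ultimately show ?thesis by simp
qed

definition hom_ideal :: "nat \<Rightarrow> 'k::comm_ring_1 poly_ring set \<Rightarrow> (nat \<Rightarrow> nat) set" where
  "hom_ideal m I = {\<phi> \<in> hom_m m. monom (seq_exp m \<phi>) \<in> I}"

lemma poset_ideal_hom_ideal:
  assumes "strongly_stable I"
  shows "poset_ideal m (hom_ideal m I)"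
  unfolding poset_ideal_def hom_ideal_def using strongly_stable_lower_seq[OF assms] by auto

lemma marker_if_mem:
  assumes "\<phi> \<in> hom_m m" "\<phi> \<in> J"
  shows "marker m J m \<phi>"
proof -
  have "\<psi> = \<phi>" if "\<psi> \<in> hom_m m" "\<forall>a\<in>{1..m}. \<psi> a = \<phi> a" for \<psi>
  proof
    fix a show "\<psi> a = \<phi> a" using that assms(1) unfolding hom_m_def by (cases "a \<in> {1..m}") auto
  qed
  then show ?thesis using assms unfolding marker_def hom_m_def by auto
qed

lemma hom_ideal_Lp2:
  assumes J: "poset_ideal m J"
  shows "hom_ideal m (Lp2 m J :: 'k::comm_ring_1 poly_ring set) = J"
proof (intro equalityI subsetI)
  fix \<phi> assume "\<phi> \<in> J"
  then have "\<phi> \<in> hom_m m" using J unfolding poset_ideal_def by blast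
  then have "seq_exp m \<phi> \<in> marker_exps m J"
    using marker_if_mem \<open>\<phi> \<in> J\<close> unfolding marker_exps_def by blast
  then show "\<phi> \<in> hom_ideal m (Lp2 m J :: 'k poly_ring set)"
    unfolding hom_ideal_def Lp2_eq_marker_exps monom_in_ideal_gen_iff
    using \<open>\<phi> \<in> hom_m m\<close> by (metis (mono_tags) add.right_neutral mem_Collect_eq)
next
  fix \<phi> assume "\<phi> \<in> hom_ideal m (Lp2 m J :: 'k poly_ring set)"
  then have \<phi>: "\<phi> \<in> hom_m m" and "(monom (seq_exp m \<phi>) :: 'k poly_ring) \<in> Lp2 m J"
    unfolding hom_ideal_def by auto
  then obtain r \<alpha> w where mk: "marker m J r \<alpha>" and eq: "seq_exp m \<phi> = seq_exp r \<alpha> + w"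
    unfolding Lp2_eq_marker_exps monom_in_ideal_gen_iff marker_exps_def by blast
  then have "\<forall>a\<in>{1..r}. \<phi> a \<le> \<alpha> a"
    using sorted_le_if_count_le[of m \<phi> r \<alpha>] count_le_mono[OF eq] \<phi>
    unfolding marker_def hom_m_def by blast
  then show "\<phi> \<in> J" using below_marker_in_ideal[OF J mk \<phi>] by blast
qed

lemma eq_add_minus_if_lookup_le:
  fixes k v :: "nat \<Rightarrow>\<^sub>0 nat"
  assumes "\<And>x. Poly_Mapping.lookup k x \<le> Poly_Mapping.lookup v x"
  shows "v = k + (v - k)"
  using assms by (intro poly_mapping_eqI) (simp add: lookup_add lookup_minus)

text \<open>Extending a marker by a variable \<open>x\<^sub>N\<close> that occurs in no generator shows that the
  marker's monomial is itself divisible by a generator.\<close>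

lemma marker_exp_in_ideal:
  assumes K: "finite K" "I = ideal_gen (monom ` K :: 'k::comm_ring_1 poly_ring set)"
    and mk: "marker m (hom_ideal m I) r \<alpha>"
  shows "\<exists>k\<in>K. \<exists>w. seq_exp r \<alpha> = k + w"
proof -
  define N where "N = Suc (Max (insert (\<alpha> r) (\<Union>k\<in>K. Poly_Mapping.keys k)))"
  have le_Max: "x \<le> Max (insert (\<alpha> r) (\<Union>k\<in>K. Poly_Mapping.keys k))"
    if "x \<in> insert (\<alpha> r) (\<Union>k\<in>K. Poly_Mapping.keys k)" for x
    using K(1) that by (intro Max_ge) auto
  have N: "\<alpha> r < N" "\<And>k. k \<in> K \<Longrightarrow> N \<notin> Poly_Mapping.keys k"
    using le_Max[of "\<alpha> r"] le_Max[of N] unfolding N_def by auto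
  have "r \<le> m" "mono_on {1..r} \<alpha>" using mk unfolding marker_def by auto
  define \<phi> where "\<phi> = marker_ext m r \<alpha> (\<lambda>a. if a \<in> {1..m} then N else 0)"
  have "(\<lambda>a. if a \<in> {1..m} then N else 0) \<in> hom_m m" unfolding hom_m_def mono_on_def by auto
  then have "\<phi> \<in> hom_m m" unfolding \<phi>_def
    using marker_ext_in_hom_m \<open>r \<le> m\<close> \<open>mono_on {1..r} \<alpha>\<close> by blast
  then have "\<phi> \<in> hom_ideal m I" using mk unfolding marker_def \<phi>_def marker_ext_def by auto
  then obtain k w where k: "k \<in> K" "seq_exp m \<phi> = k + w"
    unfolding hom_ideal_def K(2) monom_in_ideal_gen_iff by blast
  have seq_m: "seq_exp m \<phi> = seq_exp r \<alpha> + (\<Sum>a\<in>{Suc r..m}. var_exp N)"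
  proof -
    have "seq_exp r \<phi> = seq_exp r \<alpha>" by (rule seq_exp_cong) (simp add: \<phi>_def marker_ext_def)
    moreover have "(\<Sum>a\<in>{Suc r..m}. var_exp (\<phi> a)) = (\<Sum>a\<in>{Suc r..m}. var_exp N)"
      using N(1) by (intro sum.cong) (auto simp: \<phi>_def marker_ext_def)
    ultimately show ?thesis using seq_exp_split[OF \<open>r \<le> m\<close>, of \<phi>] by simp
  qed
  have "Poly_Mapping.lookup k x \<le> Poly_Mapping.lookup (seq_exp r \<alpha>) x" for x
  proof (cases "x = N")
    case True
    then show ?thesis using N(2)[OF k(1)] by (simp add: in_keys_iff)
  next
    case False
    have "Poly_Mapping.lookup (\<Sum>a\<in>{Suc r..m}. var_exp N) x = 0"
      unfolding lookup_sum lookup_var_exp using False by simp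
    then have "Poly_Mapping.lookup (seq_exp m \<phi>) x = Poly_Mapping.lookup (seq_exp r \<alpha>) x"
      unfolding seq_m lookup_add by simp
    then show ?thesis using k(2) by (simp add: lookup_add)
  qed
  then show ?thesis using k(1) eq_add_minus_if_lookup_le by blast
qed

lemma marker_if_low_degree:
  assumes I: "I = ideal_gen (G :: 'k::comm_ring_1 poly_ring set)"
    and b: "monom b \<in> I" "total_deg b \<le> m"
  obtains \<alpha> where "marker m (hom_ideal m I) (total_deg b) \<alpha>" "seq_exp (total_deg b) \<alpha> = b"
proof -
  obtain \<alpha> where \<alpha>: "mono_on {1..total_deg b} \<alpha>" "seq_exp (total_deg b) \<alpha> = b"
    using sorted_seq_exp_exists[of b "total_deg b"] by blast
  have "\<phi> \<in> hom_ideal m I" if "\<phi> \<in> hom_m m" "\<forall>a\<in>{1..total_deg b}. \<phi> a = \<alpha> a" for \<phi>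
  proof -
    have "seq_exp m \<phi> = b + (\<Sum>a\<in>{Suc (total_deg b)..m}. var_exp (\<phi> a))"
      using seq_exp_split[OF b(2), of \<phi>] seq_exp_cong[of "total_deg b" \<phi> \<alpha>] that(2) \<alpha>(2) by simp
    then show ?thesis using monom_add_in_ideal_gen b(1) that(1) unfolding I hom_ideal_def by simp
  qed
  then have "marker m (hom_ideal m I) (total_deg b) \<alpha>" using \<alpha>(1) b(2) unfolding marker_def by blast
  then show thesis using that \<alpha>(2) by blast
qed

lemma minimal_generator_exists:
  fixes K :: "(nat \<Rightarrow>\<^sub>0 nat) set"
  assumes "k \<in> K"
  obtains b where "b \<in> K" "\<exists>w. k = b + w"
    "\<forall>j\<in>Poly_Mapping.keys b. (monom (b - var_exp j) :: 'k::comm_ring_1 poly_ring) \<notin> ideal_gen (monom ` K)"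
proof -
  define D where "D = {b\<in>K. \<exists>w. k = b + w}"
  have "k \<in> D" unfolding D_def using assms by (metis (mono_tags) add.right_neutral mem_Collect_eq)
  then obtain b where b: "b \<in> D" and least: "\<And>b'. b' \<in> D \<Longrightarrow> total_deg b \<le> total_deg b'"
    using ex_has_least_nat[of "\<lambda>x. x \<in> D" k total_deg] by blast
  have "(monom (b - var_exp j) :: 'k poly_ring) \<notin> ideal_gen (monom ` K)"
    if j: "j \<in> Poly_Mapping.keys b" for j
  proof
    assume "(monom (b - var_exp j) :: 'k poly_ring) \<in> ideal_gen (monom ` K)"
    then obtain b' w' where b': "b' \<in> K" "b - var_exp j = b' + w'"
      unfolding monom_in_ideal_gen_iff by blast
    have b_eq: "b = b' + (w' + var_exp j)"
      using add_var_exp_minus[OF j] b'(2) by (metis add.assoc)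
    obtain w where "k = b + w" using b unfolding D_def by blast
    then have "k = b' + (w' + var_exp j + w)" using b_eq by (simp add: add.assoc)
    then have "b' \<in> D" unfolding D_def using b'(1) by blast
    moreover have "total_deg b' < total_deg b" using b_eq by (simp add: total_deg_add)
    ultimately show False using least by fastforce
  qed
  then show thesis using that b unfolding D_def by blast
qed

lemma koszul_basis_0: "monom b \<in> I \<Longrightarrow> koszul_basis I n b 0 = {{}}"
  unfolding koszul_basis_def sq_exp_def
  by (auto simp: card_eq_0_iff intro: finite_subset[of _ "{0..<n}"])

lemma koszul_basis_1_eq_empty:
  assumes "\<forall>j\<in>Poly_Mapping.keys b. monom (b - var_exp j) \<notin> I"
  shows "koszul_basis I n b 1 = {}"
proof (rule ccontr)
  assume "koszul_basis I n b 1 \<noteq> {}"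
  then obtain j c where "b = c + var_exp j" "monom c \<in> I"
    unfolding koszul_basis_def by (auto simp: card_1_singleton_iff sq_exp_def)
  moreover from this have "j \<in> Poly_Mapping.keys b" by (simp add: in_keys_iff lookup_add lookup_var_exp)
  ultimately show False using assms by auto
qed

lemma betti_0_minimal_generator:
  assumes "monom b \<in> (I :: 'k::field poly_ring set)"
    and "\<forall>j\<in>Poly_Mapping.keys b. monom (b - var_exp j) \<notin> I"
  shows "betti I n 0 b = 1"
proof -
  have chains_0: "koszul_chains I n b 0 = {f. Poly_Mapping.keys f \<subseteq> {{}}}"
    unfolding koszul_chains_def koszul_basis_0[OF assms(1)] ..
  have chains_1: "koszul_chains I n b (Suc 0) = {0}"
    unfolding koszul_chains_def using koszul_basis_1_eq_empty[OF assms(2)] by auto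
  have "koszul_diff f = 0" if "Poly_Mapping.keys f \<subseteq> {{}}" for f :: "nat set \<Rightarrow>\<^sub>0 'k"
    unfolding koszul_diff_def using that by (intro sum.neutral) auto
  then have cycles: "koszul_chains I n b 0 \<inter> {f. koszul_diff f = 0} = koszul_chains I n b 0"
    unfolding chains_0 by auto
  have "V.dim (koszul_chains I n b 0) = 1"
  proof (rule V.dim_unique[of "{Poly_Mapping.single {} 1}"])
    show "koszul_chains I n b 0 \<subseteq> V.span {Poly_Mapping.single {} (1::'k)}"
      unfolding chains_0 using in_span_singles[of _ "{{}}"] by auto
    have "Poly_Mapping.single {} (1::'k) \<noteq> 0"
      by (metis lookup_single_eq lookup_zero one_neq_zero)
    then show "V.independent {Poly_Mapping.single {} (1::'k)}" by simp
  qed (auto simp: chains_0)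
  moreover have "V.dim (koszul_diff ` koszul_chains I n b (Suc 0)) = 0"
  proof -
    have "koszul_diff ` koszul_chains I n b (Suc 0) = {0}" unfolding chains_1 by (simp add: koszul_diff_def)
    moreover have "V.dim {0 :: nat set \<Rightarrow>\<^sub>0 'k} \<le> card ({} :: (nat set \<Rightarrow>\<^sub>0 'k) set)"
      by (rule V.dim_le_card) auto
    ultimately show ?thesis by simp
  qed
  ultimately show ?thesis unfolding betti_def cycles by simp
qed

lemma m_regular_minimal_generator_deg:
  fixes I :: "'k::field poly_ring set"
  assumes reg: "m_regular m I" and K: "finite K" "I = ideal_gen (monom ` K)" and "b \<in> K"
    and min: "\<forall>j\<in>Poly_Mapping.keys b. monom (b - var_exp j) \<notin> I"
  shows "total_deg b \<le> m"
proof -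
  define n where "n = Suc (Max (insert 0 (\<Union>k\<in>K. Poly_Mapping.keys k)))"
  have keys_n: "Poly_Mapping.keys k \<subseteq> {0..<n}" if "k \<in> K" for k
    using K(1) that by (auto simp: n_def less_Suc_eq_le intro!: Max_ge)
  then have "\<forall>g\<in>monom ` K. vars g \<subseteq> {0..<n}" by (auto simp: vars_def)
  then have "\<forall>i c. Poly_Mapping.keys c \<subseteq> {0..<n} \<and> betti I n i c \<noteq> 0 \<longrightarrow> total_deg c \<le> m + i"
    using reg K unfolding m_regular_def by blast
  moreover have "monom b \<in> I"
    using \<open>b \<in> K\<close> unfolding K(2) monom_in_ideal_gen_iff by (metis add.right_neutral)
  then have "betti I n 0 b \<noteq> 0" using betti_0_minimal_generator[OF _ min] by simp
  ultimately show ?thesis using keys_n[OF \<open>b \<in> K\<close>] by (metis add.right_neutral)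
qed

theorem Lp2_hom_ideal:
  fixes I :: "'k::field poly_ring set"
  assumes "fin_gen I" "strongly_stable I" "m_regular m I"
  shows "Lp2 m (hom_ideal m I) = I"
proof -
  obtain K where K: "finite K" "I = ideal_gen (monom ` K)"
    using finite_monomial_generators assms(1,2) unfolding strongly_stable_def by blast
  have "Lp2 m (hom_ideal m I) = ideal_gen (monom ` K)"
    unfolding Lp2_eq_marker_exps
  proof (rule ideal_gen_monom_eqI)
    fix u assume "u \<in> marker_exps m (hom_ideal m I)"
    then show "\<exists>k\<in>K. \<exists>w. u = k + w"
      using marker_exp_in_ideal[OF K] unfolding marker_exps_def by blast
  next
    fix k assume "k \<in> K"
    then obtain b where b: "b \<in> K" "\<exists>w. k = b + w"
      and min: "\<forall>j\<in>Poly_Mapping.keys b. monom (b - var_exp j) \<notin> I"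
      using minimal_generator_exists K(2) by metis
    have "monom b \<in> I" using b(1) unfolding K(2) monom_in_ideal_gen_iff by (metis add.right_neutral)
    moreover have "total_deg b \<le> m" using m_regular_minimal_generator_deg[OF assms(3) K b(1) min] .
    ultimately obtain \<alpha> where "marker m (hom_ideal m I) (total_deg b) \<alpha>" "seq_exp (total_deg b) \<alpha> = b"
      using marker_if_low_degree[OF K(2)] by blast
    then have "b \<in> marker_exps m (hom_ideal m I)"
      unfolding marker_exps_def by (metis (mono_tags, lifting) mem_Collect_eq)
    then show "\<exists>u\<in>marker_exps m (hom_ideal m I). \<exists>w. k = u + w" using b(2) by blast
  qed
  then show ?thesis using K(2) by simp
qed

theorem theorem6p2:
  fixes m :: nat
  assumes "m \<ge> 1"
  shows "(\<forall>J. poset_ideal m J \<longrightarrow>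
            strongly_stable (Lp2 m J :: 'k::field poly_ring set) \<and> m_regular m (Lp2 m J :: 'k poly_ring set))
         \<and> bij_betw (Lp2 m :: (nat \<Rightarrow> nat) set \<Rightarrow> 'k poly_ring set)
              {J. poset_ideal m J}
              {I. fin_gen I \<and> strongly_stable I \<and> m_regular m I}"
proof (intro conjI allI impI)
  fix J assume "poset_ideal m J"
  then show "strongly_stable (Lp2 m J :: 'k poly_ring set)" "m_regular m (Lp2 m J :: 'k poly_ring set)"
    by (rule Lp2_strongly_stable, rule Lp2_m_regular)
next
  show "bij_betw (Lp2 m :: (nat \<Rightarrow> nat) set \<Rightarrow> 'k poly_ring set)
      {J. poset_ideal m J} {I. fin_gen I \<and> strongly_stable I \<and> m_regular m I}"
    by (rule bij_betw_byWitness[where f' = "hom_ideal m"])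
      (auto simp: hom_ideal_Lp2 Lp2_hom_ideal Lp2_fin_gen Lp2_strongly_stable Lp2_m_regular
        intro: poset_ideal_hom_ideal)
qed

end
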